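(* Let $\beta>0$ and $m\ge1$. For $\delta>0$ and $n\ge1$ let $\mathcal{B}_\delta$ be the event \[ \sum_{i=1}^n\left(\frac{\Delta(H_{mi})}{(mi)^{2/(2+\beta)}}\right)^2\ge n^{\frac{\beta}{2+\beta}+\delta}. \] Then for any $\delta>0$ and $\gamma>0$ there exists a constant $L$, depending on $\delta,\gamma,\beta,m$ but not on $n$, such that $\Pr(\mathcal{B}_\delta)\le L\,n^{-\gamma}$ for all $n\ge1$.
   Context: Fix a real $\beta>0$ and a positive integer $m$. The random tree process $(G^n_{1,\beta})_{n\ge1}$ is defined as follows. $G^1_{1,\beta}$ consists of a single vertex $v_1$ and no edges. Given $G^n_{1,\beta}$ with vertices $v_1,\dots,v_n$ and directed edges $e_2,\dots,e_n$ (where $e_i$ is the edge whose tail is $v_i$), $G^{n+1}_{1,\beta}$ is obtained by adding a vertex $v_{n+1}$ and a directed edge $e_{n+1}$ with tail $v_{n+1}$ and head a "target vertex" determined by a random variable $f_{n+1}$, independent of $f_2,\dots,f_n$, taking values in $\Omega_{n+1}=\{(i,v):1\le i\le n\}\cup\{(i,h),(i,t):2\le i\le n\}$ with $\Pr(f_{n+1}=(i,v))=\beta/((2+\beta)n-2)$ and $\Pr(f_{n+1}=(i,h))=\Pr(f_{n+1}=(i,t))=1/((2+\beta)n-2)$. If $f_{n+1}=(i,v)$ the target is $v_i$ (chosen "uniformly"); if $f_{n+1}=(i,h)$ the target is the head of $e_i$, and if $f_{n+1}=(i,t)$ the target is the tail $v_i$ of $e_i$ (chosen "preferentially", by copying the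 head half-edge, resp. tail half-edge, of $e_i$). Consequently the target is $v_i$ with probability $(d_n(v_i)+\beta)/((2+\beta)n-2)$, where $d_n(v)$ is the degree of $v$ in $G^n_{1,\beta}$. Each edge is regarded as two half-edges, one at each endpoint; the degree of a vertex is the number of half-edges at it (loops count twice). For $t\ge1$, $H_t$ is the undirected multigraph formed from $G^t_{1,\beta}$ by identifying, for each $j<\lceil t/m\rceil$, the vertices $v_{(j-1)m+1},\dots,v_{jm}$ into one vertex $w_j$, and identifying the remaining vertices into one vertex $w_{\lceil t/m\rceil}$ (all edges kept). $\Delta(G)$ denotes the maximum degree of $G$. Known input (M\'ori): for any positive integer $k$ there exists $\tilde M_k$ such that for all $n$, $\mathbb{E}\big[\big((\Delta(G^n_{1,\beta})+\beta)/n^{1/(2+\beta)}\big)^k\big]\le\tilde M_k$. *)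

theory Defs
  imports "HOL-Probability.Probability"
begin

text \<open>Elements of \<Omega>_{n+1}: (i,v), (i,h), (i,t).\<close>
datatype choice = Vx nat | Hd nat | Tl nat

text \<open>Weight of each outcome of f_{n+1} (graph G^n has n vertices).\<close>
definition fweight :: "real \<Rightarrow> nat \<Rightarrow> choice \<Rightarrow> real" where
  "fweight \<beta> n c = (case c of
      Vx i \<Rightarrow> if 1 \<le> i \<and> i \<le> n then \<beta> / ((2 + \<beta>) * real n - 2) else 0
    | Hd i \<Rightarrow> if 2 \<le> i \<and> i \<le> n then 1 / ((2 + \<beta>) * real n - 2) else 0
    | Tl i \<Rightarrow> if 2 \<le> i \<and> i \<le> n then 1 / ((2 + \<beta>) * real n - 2) else 0)"

definition fpmf :: "real \<Rightarrow> nat \<Rightarrow> choice pmf" where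
  "fpmf \<beta> n = embed_pmf (fweight \<beta> n)"

text \<open>Joint law of the list [f_2, ..., f_t] (independent), i.e. of G^t.\<close>
fun choices :: "real \<Rightarrow> nat \<Rightarrow> choice list pmf" where
  "choices \<beta> 0 = return_pmf []"
| "choices \<beta> (Suc k) =
     (if k = 0 then return_pmf []
      else bind_pmf (choices \<beta> k) (\<lambda>xs. map_pmf (\<lambda>f. xs @ [f]) (fpmf \<beta> k)))"

text \<open>Heads: given the list hs of heads of e_2,...,e_k, the head of e_{k+1}.\<close>
definition target :: "nat list \<Rightarrow> choice \<Rightarrow> nat" where
  "target hs c = (case c of Vx i \<Rightarrow> i | Tl i \<Rightarrow> i | Hd i \<Rightarrow> hs ! (i - 2))"

definition heads :: "choice list \<Rightarrow> nat list" where
  "heads fs = foldl (\<lambda>hs f. hs @ [target hs f]) [] fs"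

definition head :: "choice list \<Rightarrow> nat \<Rightarrow> nat" where
  "head fs i = heads fs ! (i - 2)"

text \<open>Vertex v_v of G^t is mapped to w_{ceil(v/m)} in H_t.\<close>
definition blk :: "nat \<Rightarrow> nat \<Rightarrow> nat" where
  "blk m v = (v + m - 1) div m"

text \<open>Degree of w_j in H_t (number of half-edges, loops count twice).\<close>
definition degH :: "nat \<Rightarrow> choice list \<Rightarrow> nat \<Rightarrow> nat \<Rightarrow> nat" where
  "degH m fs t j = card {i \<in> {2..t}. blk m i = j} + card {i \<in> {2..t}. blk m (head fs i) = j}"

definition maxdegH :: "nat \<Rightarrow> choice list \<Rightarrow> nat \<Rightarrow> nat" where
  "maxdegH m fs t = Max (degH m fs t ` {1..blk m t})"

definition eventB :: "real \<Rightarrow> nat \<Rightarrow> real \<Rightarrow> nat \<Rightarrow> choice list set" where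
  "eventB \<beta> m \<delta> n = {fs. (\<Sum>i=1..n. (real (maxdegH m fs (m * i)) / real (m * i) powr (2 / (2 + \<beta>)))\<^sup>2)
        \<ge> real n powr (\<beta> / (2 + \<beta>) + \<delta>)}"

end

theory Submission
  imports Defs
begin

(* The paper's argument rests on Mori's moment bound E[(Delta(G^n)+beta)^k] = O(n^(k/(2+beta))).  For each k the potential
     potential k (G^t) = sum over vertices v of (d(v)+beta)(d(v)+beta+1)...(d(v)+beta+k-1)
   satisfies the exact one-step recursion
     E[potential at t+1 | G^t] = (1 + k/((2+beta)t-2)) * potential at t + const,
   because the target is chosen with probability proportional to d(v)+beta.  Solving it gives
   E[potential k (G^t)] = O(t^(k/(2+beta)+1)), one power of t weaker than Mori, which suffices.
   A vertex of H_t merges at most m vertices of G^t, so Delta(H_t)^k <= m^k * potential k,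
   and Markov's inequality yields tail bounds for Delta(H_t) of every polynomial order.
   Finally, B_delta is covered by the n events "the i-th summand exceeds a n^delta i^(a-1)"
   (a = beta/(2+beta)); a union bound with k large gives P(B_delta) = O(n^(-gamma)). *)

definition outcomes :: "nat \<Rightarrow> choice set" where
  "outcomes n = Vx ` {1..n} \<union> Hd ` {2..n} \<union> Tl ` {2..n}"

lemma finite_outcomes: "finite (outcomes n)" by (simp add: outcomes_def)

lemma normaliser_pos: "\<beta> > 0 \<Longrightarrow> n \<ge> 1 \<Longrightarrow> (2 + \<beta>) * real n - 2 > 0"
proof -
  assume "\<beta> > 0" "n \<ge> 1"
  hence "(2 + \<beta>) * real n \<ge> (2 + \<beta>) * 1" by (intro mult_left_mono) auto
  hence "(2 + \<beta>) * real n \<ge> 2 + \<beta>" by simp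
  thus ?thesis using \<open>\<beta> > 0\<close> by linarith
qed

lemma fweight_nonneg: "\<beta> > 0 \<Longrightarrow> 0 \<le> fweight \<beta> n c"
  using normaliser_pos[of \<beta> n] by (auto simp: fweight_def split: choice.split)

lemma fweight_zero: "c \<notin> outcomes n \<Longrightarrow> fweight \<beta> n c = 0"
  by (auto simp: fweight_def outcomes_def split: choice.split)

lemma sum_outcomes:
  fixes g :: "choice \<Rightarrow> real"
  shows "(\<Sum>c\<in>outcomes n. g c) = (\<Sum>i=1..n. g (Vx i)) + (\<Sum>i=2..n. g (Hd i)) + (\<Sum>i=2..n. g (Tl i))"
proof -
  have d1: "(Vx ` {1..n} \<union> Hd ` {2..n}) \<inter> Tl ` {2..n} = {}" by auto
  have d2: "Vx ` {1..n} \<inter> Hd ` {2..n} = {}" by auto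
  have "(\<Sum>c\<in>outcomes n. g c)
      = (\<Sum>c\<in>Vx ` {1..n}. g c) + (\<Sum>c\<in>Hd ` {2..n}. g c) + (\<Sum>c\<in>Tl ` {2..n}. g c)"
    unfolding outcomes_def
    by (simp only: sum.union_disjoint[OF _ _ d1] sum.union_disjoint[OF _ _ d2]
                   finite_Un finite_imageI finite_atLeastAtMost simp_thms)
  thus ?thesis by (simp add: sum.reindex inj_on_def)
qed

lemma sum_fweight:
  assumes "\<beta> > 0" "n \<ge> 1"
  shows "(\<Sum>c\<in>outcomes n. fweight \<beta> n c) = 1"
proof -
  define S where "S = (2 + \<beta>) * real n - 2"
  have S: "S > 0" using normaliser_pos[OF assms] by (simp add: S_def)
  have "(\<Sum>c\<in>outcomes n. fweight \<beta> n c) = real n * (\<beta> / S) + real (n - 1) * (1/S) + real (n - 1) * (1/S)"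
    unfolding sum_outcomes by (simp add: fweight_def S_def)
  also have "\<dots> = (real n * \<beta> + 2 * real (n - 1)) / S" by (simp add: add_divide_distrib)
  also have "real n * \<beta> + 2 * real (n - 1) = S" using assms(2) by (simp add: S_def of_nat_diff algebra_simps)
  finally show ?thesis using S by simp
qed

lemma fweight_total:
  assumes "\<beta> > 0" "n \<ge> 1"
  shows "(\<integral>\<^sup>+x. ennreal (fweight \<beta> n x) \<partial>count_space UNIV) = 1"
proof -
  have "(\<integral>\<^sup>+x. ennreal (fweight \<beta> n x) \<partial>count_space UNIV) = (\<Sum>x\<in>outcomes n. ennreal (fweight \<beta> n x))"
    by (rule nn_integral_count_space') (auto simp: finite_outcomes fweight_zero)
  also have "\<dots> = ennreal (\<Sum>x\<in>outcomes n. fweight \<beta> n x)"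
    using fweight_nonneg[OF assms(1)] by (simp add: sum_ennreal)
  also have "\<dots> = 1" by (simp only: sum_fweight[OF assms] ennreal_1)
  finally show ?thesis .
qed

lemma pmf_fpmf: "\<beta> > 0 \<Longrightarrow> n \<ge> 1 \<Longrightarrow> pmf (fpmf \<beta> n) c = fweight \<beta> n c"
  unfolding fpmf_def by (rule pmf_embed_pmf[OF fweight_nonneg fweight_total])

lemma set_fpmf: "\<beta> > 0 \<Longrightarrow> n \<ge> 1 \<Longrightarrow> set_pmf (fpmf \<beta> n) \<subseteq> outcomes n"
proof
  fix x assume "\<beta> > 0" "n \<ge> 1" "x \<in> set_pmf (fpmf \<beta> n)"
  hence "fweight \<beta> n x \<noteq> 0" using pmf_fpmf[of \<beta> n x] by (simp add: set_pmf_eq)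
  thus "x \<in> outcomes n" using fweight_zero by blast
qed

lemma expectation_fpmf:
  assumes "\<beta> > 0" "n \<ge> 1"
  shows "measure_pmf.expectation (fpmf \<beta> n) h = (\<Sum>c\<in>outcomes n. fweight \<beta> n c * h c)"
  using set_fpmf[OF assms]
  by (subst integral_measure_pmf_real[OF finite_outcomes]) (auto simp: pmf_fpmf[OF assms] mult.commute)

(* A choice sequence [f_2,...,f_t] is admissible when each f_{j+2} lies in its support
   Omega_{j+2} (= outcomes (j+1)); the process only produces admissible sequences. *)
definition admissible :: "choice list \<Rightarrow> bool" where
  "admissible fs = (\<forall>j<length fs. fs ! j \<in> outcomes (Suc j))"

lemma heads_snoc: "heads (xs @ [f]) = heads xs @ [target (heads xs) f]"
  by (simp add: heads_def)

lemma heads_Nil[simp]: "heads [] = []" by (simp add: heads_def)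

lemma length_heads[simp]: "length (heads xs) = length xs"
  by (induction xs rule: rev_induct) (auto simp: heads_snoc)

lemma heads_append_take: "take (length xs) (heads (xs @ ys)) = heads xs"
proof (induction ys rule: rev_induct)
  case Nil thus ?case by simp
next
  case (snoc y ys)
  have "heads (xs @ ys @ [y]) = heads (xs @ ys) @ [target (heads (xs @ ys)) y]"
    using heads_snoc[of "xs @ ys" y] by simp
  thus ?case using snoc by simp
qed

lemma heads_take: "heads (take n fs) = take n (heads fs)"
proof (cases "n \<le> length fs")
  case True
  have "take n (heads (take n fs @ drop n fs)) = heads (take n fs)"
    using heads_append_take[of "take n fs" "drop n fs"] True by simp
  thus ?thesis by simp
next
  case False thus ?thesis by simp
qed

lemma head_take: "i \<le> Suc n \<Longrightarrow> 2 \<le> i \<Longrightarrow> head (take n fs) i = head fs i"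
  unfolding head_def heads_take by (simp add: nth_take)

lemma head_snoc_le: "i \<le> Suc (length xs) \<Longrightarrow> 2 \<le> i \<Longrightarrow> head (xs @ [f]) i = head xs i"
  using head_take[of i "length xs" "xs @ [f]"] by simp

lemma head_snoc_last: "head (xs @ [f]) (Suc (Suc (length xs))) = target (heads xs) f"
  by (simp add: head_def heads_snoc nth_append)

lemma admissible_snoc: "admissible (xs @ [f]) \<longleftrightarrow> admissible xs \<and> f \<in> outcomes (Suc (length xs))"
  unfolding admissible_def by (auto simp: nth_append less_Suc_eq)

lemma target_range:
  assumes "\<forall>i\<in>{2..Suc (length xs)}. 1 \<le> head xs i \<and> head xs i < i"
    and "f \<in> outcomes (Suc (length xs))"
  shows "1 \<le> target (heads xs) f \<and> target (heads xs) f \<le> Suc (length xs)"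
proof -
  { fix i assume i: "f = Hd i" "2 \<le> i" "i \<le> Suc (length xs)"
    hence "1 \<le> head xs i \<and> head xs i < i" using assms(1) by auto
    hence ?thesis using i by (auto simp: target_def head_def) }
  thus ?thesis using assms(2) by (auto simp: outcomes_def target_def)
qed

lemma admissible_heads:
  "admissible fs \<Longrightarrow> i \<in> {2..Suc (length fs)} \<Longrightarrow> 1 \<le> head fs i \<and> head fs i < i"
proof (induction fs arbitrary: i rule: rev_induct)
  case Nil thus ?case by simp
next
  case (snoc f xs)
  have vx: "admissible xs" and fO: "f \<in> outcomes (Suc (length xs))" using snoc.prems(1) by (auto simp: admissible_snoc)
  have IH: "\<forall>i\<in>{2..Suc (length xs)}. 1 \<le> head xs i \<and> head xs i < i" using snoc.IH vx by blast
  show ?case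
  proof (cases "i \<le> Suc (length xs)")
    case True thus ?thesis using IH head_snoc_le[of i xs f] snoc.prems(2) by auto
  next
    case False
    hence "i = Suc (Suc (length xs))" using snoc.prems(2) by auto
    thus ?thesis using head_snoc_last[of xs f] target_range[OF IH fO] by auto
  qed
qed

lemma set_choices:
  assumes "\<beta> > 0"
  shows "set_pmf (choices \<beta> t) \<subseteq> {fs. length fs = t - 1 \<and> admissible fs}"
proof (induction t)
  case 0 thus ?case by (simp add: admissible_def)
next
  case (Suc k)
  show ?case
  proof (cases "k = 0")
    case True thus ?thesis by (simp add: admissible_def)
  next
    case False
    have "set_pmf (choices \<beta> (Suc k)) = (\<Union>xs\<in>set_pmf (choices \<beta> k). (\<lambda>f. xs @ [f]) ` set_pmf (fpmf \<beta> k))"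
      using False by simp
    also have "\<dots> \<subseteq> {fs. length fs = Suc k - 1 \<and> admissible fs}"
    proof safe
      fix xs f assume xs: "xs \<in> set_pmf (choices \<beta> k)" and f: "f \<in> set_pmf (fpmf \<beta> k)"
      have l: "length xs = k - 1" "admissible xs" using Suc xs by auto
      have "f \<in> outcomes k" using set_fpmf[OF assms, of k] f False by auto
      thus "length (xs @ [f]) = Suc k - 1" "admissible (xs @ [f])" using l False by (auto simp: admissible_snoc)
    qed
    finally show ?thesis .
  qed
qed

lemma finite_admissible: "finite {fs. length fs = n \<and> admissible fs}"
proof -
  have "{fs. length fs = n \<and> admissible fs} \<subseteq> {fs. set fs \<subseteq> (\<Union>j\<le>n. outcomes j) \<and> length fs = n}"
    by (auto simp: admissible_def in_set_conv_nth) (metis Suc_leI atMost_iff)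
  moreover have "finite {fs. set fs \<subseteq> (\<Union>j\<le>n. outcomes j) \<and> length fs = n}"
    by (rule finite_lists_length_eq) (simp add: finite_outcomes)
  ultimately show ?thesis by (rule finite_subset)
qed

lemma finite_set_choices: "\<beta> > 0 \<Longrightarrow> finite (set_pmf (choices \<beta> t))"
  using set_choices finite_admissible finite_subset by blast

(* Degree of v in G^t: the tail half-edge of e_v plus the heads landing on v. *)
definition degG :: "choice list \<Rightarrow> nat \<Rightarrow> nat \<Rightarrow> nat" where
  "degG fs t v = card {i\<in>{2..t}. i = v} + card {i\<in>{2..t}. head fs i = v}"

definition rising :: "real \<Rightarrow> nat \<Rightarrow> nat \<Rightarrow> real" where
  "rising \<beta> k d = (\<Prod>j<k. real d + \<beta> + real j)"

definition potential :: "real \<Rightarrow> nat \<Rightarrow> choice list \<Rightarrow> nat \<Rightarrow> real" where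
  "potential \<beta> k fs t = (\<Sum>v=1..t. rising \<beta> k (degG fs t v))"

(* Basic algebra of rising factorials: the increment identity drives the recursion,
   and the rising factorial dominates the plain power d^k. *)
lemma rising_Suc: "(real d + \<beta>) * rising \<beta> k (Suc d) = rising \<beta> k d * (real d + \<beta> + real k)"
  by (induction k) (auto simp: rising_def algebra_simps)

lemma rising_nonneg: "\<beta> > 0 \<Longrightarrow> 0 \<le> rising \<beta> k d"
  unfolding rising_def by (intro prod_nonneg) auto

lemma rising_ge_power: "\<beta> > 0 \<Longrightarrow> real d ^ k \<le> rising \<beta> k d"
proof (induction k)
  case 0 thus ?case by (simp add: rising_def)
next
  case (Suc k)
  have "real d ^ Suc k = real d ^ k * real d" by simp
  also have "\<dots> \<le> rising \<beta> k d * (real d + \<beta> + real k)"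
    using Suc rising_nonneg[of \<beta> k d] by (intro mult_mono) auto
  also have "\<dots> = rising \<beta> (Suc k) d" by (simp add: rising_def)
  finally show ?case .
qed

definition rising_incr :: "real \<Rightarrow> nat \<Rightarrow> nat \<Rightarrow> real" where
  "rising_incr \<beta> k d = rising \<beta> k (Suc d) - rising \<beta> k d"

lemma rising_incr_weighted: "(real d + \<beta>) * rising_incr \<beta> k d = real k * rising \<beta> k d"
  using rising_Suc[of d \<beta> k] by (simp add: rising_incr_def algebra_simps)

lemma card_filter_Suc: "a \<le> Suc b \<Longrightarrow>
   card {i\<in>{a..Suc b}. P i} = card {i\<in>{a..b}. P i} + (if P (Suc b) then 1 else 0)"
proof -
  assume "a \<le> Suc b"
  hence "{i\<in>{a..Suc b}. P i} = (if P (Suc b) then insert (Suc b) {i\<in>{a..b}. P i} else {i\<in>{a..b}. P i})"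
    using le_Suc_eq by auto
  thus ?thesis by simp
qed

lemma card_filter_cong: "(\<And>i. i \<in> A \<Longrightarrow> P i = Q i) \<Longrightarrow> card {i\<in>A. P i} = card {i\<in>A. Q i}"
  by (metis (mono_tags, lifting) Collect_cong)

context
  fixes xs :: "choice list" and f :: choice and t :: nat
  assumes len: "length xs = t - 1" and t1: "t \<ge> 1" and vx: "admissible xs" and fO: "f \<in> outcomes t"
begin

lemma snoc_length: "Suc (length xs) = t" using len t1 by simp

lemma snoc_head_range: "i \<in> {2..t} \<Longrightarrow> 1 \<le> head xs i \<and> head xs i < i"
  using admissible_heads[OF vx] snoc_length by auto

lemma snoc_target_range: "1 \<le> target (heads xs) f \<and> target (heads xs) f \<le> t"
  using target_range[of xs f] snoc_head_range fO snoc_length by auto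

lemma degG_step: "degG (xs @ [f]) (Suc t) v
    = degG xs t v + (if v = Suc t then 1 else 0) + (if target (heads xs) f = v then 1 else 0)"
proof -
  have h1: "card {i\<in>{2..Suc t}. i = v} = card {i\<in>{2..t}. i = v} + (if v = Suc t then 1 else 0)"
    using card_filter_Suc[of 2 t "\<lambda>i. i = v"] t1 by auto
  have "card {i\<in>{2..Suc t}. head (xs @ [f]) i = v} = card {i\<in>{2..t}. head (xs @ [f]) i = v}
          + (if head (xs @ [f]) (Suc t) = v then 1 else 0)"
    using card_filter_Suc[of 2 t "\<lambda>i. head (xs @ [f]) i = v"] t1 by auto
  also have "card {i\<in>{2..t}. head (xs @ [f]) i = v} = card {i\<in>{2..t}. head xs i = v}"
    by (rule card_filter_cong) (use head_snoc_le snoc_length in auto)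
  also have "head (xs @ [f]) (Suc t) = target (heads xs) f"
    using head_snoc_last[of xs f] snoc_length by simp
  finally show ?thesis using h1 unfolding degG_def by simp
qed

lemma degG_new: "degG xs t (Suc t) = 0"
proof -
  have "{i\<in>{2..t}. head xs i = Suc t} = {}" using snoc_head_range by fastforce
  thus ?thesis unfolding degG_def by auto
qed

lemma potential_step:
  "potential \<beta> k (xs @ [f]) (Suc t)
     = potential \<beta> k xs t + rising_incr \<beta> k (degG xs t (target (heads xs) f)) + rising \<beta> k 1"
proof -
  have "potential \<beta> k (xs @ [f]) (Suc t)
      = (\<Sum>v=1..t. rising \<beta> k (degG (xs @ [f]) (Suc t) v)) + rising \<beta> k (degG (xs @ [f]) (Suc t) (Suc t))"
    unfolding potential_def by simp
  also have "rising \<beta> k (degG (xs @ [f]) (Suc t) (Suc t)) = rising \<beta> k 1"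
    using degG_step[of "Suc t"] degG_new snoc_target_range by simp
  also have "(\<Sum>v=1..t. rising \<beta> k (degG (xs @ [f]) (Suc t) v)) =
      (\<Sum>v=1..t. rising \<beta> k (degG xs t v)
         + (if v = target (heads xs) f then rising_incr \<beta> k (degG xs t v) else 0))"
    by (rule sum.cong) (auto simp: degG_step rising_incr_def)
  also have "\<dots> = potential \<beta> k xs t + rising_incr \<beta> k (degG xs t (target (heads xs) f))"
    unfolding sum.distrib potential_def using snoc_target_range by simp
  finally show ?thesis .
qed

end

lemma sum_fiber:
  fixes g :: "nat \<Rightarrow> real"
  assumes "finite I" "finite V" "h ` I \<subseteq> V"
  shows "(\<Sum>i\<in>I. g (h i)) = (\<Sum>v\<in>V. real (card {i\<in>I. h i = v}) * g v)"
proof -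
  have "(\<Sum>i\<in>I. g (h i)) = (\<Sum>v\<in>V. \<Sum>i\<in>{i\<in>I. h i = v}. g (h i))"
    using sum.group[OF assms, of "\<lambda>i. g (h i)"] by simp
  also have "\<dots> = (\<Sum>v\<in>V. real (card {i\<in>I. h i = v}) * g v)"
    by (rule sum.cong) auto
  finally show ?thesis .
qed

lemma sum_fweight_target:
  fixes g :: "nat \<Rightarrow> real"
  assumes "\<beta> > 0" "t \<ge> 1"
  shows "(\<Sum>c\<in>outcomes t. fweight \<beta> t c * g (target (heads xs) c)) =
    (\<beta> * (\<Sum>i=1..t. g i) + (\<Sum>i=2..t. g i) + (\<Sum>i=2..t. g (head xs i))) / ((2 + \<beta>) * real t - 2)"
proof -
  define S where "S = (2 + \<beta>) * real t - 2"
  have "(\<Sum>c\<in>outcomes t. fweight \<beta> t c * g (target (heads xs) c)) =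
     (\<Sum>i=1..t. \<beta> / S * g i) + (\<Sum>i=2..t. 1 / S * g (head xs i)) + (\<Sum>i=2..t. 1 / S * g i)"
    unfolding sum_outcomes
    by (intro arg_cong2[where f="(+)"] sum.cong) (auto simp: fweight_def target_def head_def S_def)
  also have "\<dots> = (\<beta> * (\<Sum>i=1..t. g i) + (\<Sum>i=2..t. g i) + (\<Sum>i=2..t. g (head xs i))) / S"
    by (simp add: sum_divide_distrib sum_distrib_left add_divide_distrib)
  finally show ?thesis by (simp add: S_def)
qed

lemma target_distribution:
  fixes g :: "nat \<Rightarrow> real"
  assumes b: "\<beta> > 0" and len: "length xs = t - 1" and t1: "t \<ge> 1" and vx: "admissible xs"
  shows "(\<Sum>c\<in>outcomes t. fweight \<beta> t c * g (target (heads xs) c))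
       = (\<Sum>v=1..t. (real (degG xs t v) + \<beta>) * g v) / ((2 + \<beta>) * real t - 2)"
proof -
  have head_range: "i \<in> {2..t} \<Longrightarrow> 1 \<le> head xs i \<and> head xs i < i" for i
    using admissible_heads[OF vx, of i] len t1 by auto
  have heads: "(\<Sum>i=2..t. g (head xs i)) = (\<Sum>v=1..t. real (card {i\<in>{2..t}. head xs i = v}) * g v)"
    by (rule sum_fiber) (use head_range in fastforce)+
  have tails: "(\<Sum>i=2..t. g i) = (\<Sum>v=1..t. real (card {i\<in>{2..t}. i = v}) * g v)"
    using sum_fiber[of "{2..t}" "{1..t}" "\<lambda>i. i" g] by auto
  show ?thesis
    unfolding sum_fweight_target[OF b t1] heads tails
    by (simp add: sum_distrib_left sum.distrib[symmetric] degG_def algebra_simps)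
qed

(* The key identity: as the target is chosen with probability proportional to d(v)+beta and
   (d+beta) * rising_incr k d = k * rising k d, the conditional mean of the next potential is a
   fixed multiple of the current one plus a constant. *)
lemma expected_potential_step:
  assumes b: "\<beta> > 0" and len: "length xs = t - 1" and t1: "t \<ge> 1" and vx: "admissible xs"
  shows "measure_pmf.expectation (fpmf \<beta> t) (\<lambda>f. potential \<beta> k (xs @ [f]) (Suc t))
     = potential \<beta> k xs t * (1 + real k / ((2 + \<beta>) * real t - 2)) + rising \<beta> k 1"
proof -
  define S where "S = (2 + \<beta>) * real t - 2"
  have S: "S > 0" using normaliser_pos[OF b t1] by (simp add: S_def)
  define g where "g v = rising_incr \<beta> k (degG xs t v)" for v
  have "measure_pmf.expectation (fpmf \<beta> t) (\<lambda>f. potential \<beta> k (xs @ [f]) (Suc t))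
     = (\<Sum>c\<in>outcomes t. fweight \<beta> t c * ((potential \<beta> k xs t + rising \<beta> k 1) + g (target (heads xs) c)))"
    unfolding expectation_fpmf[OF b t1]
    by (rule sum.cong[OF refl]) (simp add: potential_step[OF len t1 vx] g_def)
  also have "\<dots> = (potential \<beta> k xs t + rising \<beta> k 1) * (\<Sum>c\<in>outcomes t. fweight \<beta> t c)
       + (\<Sum>c\<in>outcomes t. fweight \<beta> t c * g (target (heads xs) c))"
    by (simp add: distrib_left sum.distrib sum_distrib_left mult.commute)
  also have "(\<Sum>c\<in>outcomes t. fweight \<beta> t c) = 1" by (rule sum_fweight[OF b t1])
  also have "(\<Sum>c\<in>outcomes t. fweight \<beta> t c * g (target (heads xs) c))
      = (\<Sum>v=1..t. (real (degG xs t v) + \<beta>) * g v) / S"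
    unfolding S_def by (rule target_distribution[OF b len t1 vx])
  also have "(\<Sum>v=1..t. (real (degG xs t v) + \<beta>) * g v) = real k * potential \<beta> k xs t"
    by (simp add: g_def rising_incr_weighted potential_def sum_distrib_left)
  finally show ?thesis using S by (simp add: S_def algebra_simps)
qed

definition mean_potential :: "real \<Rightarrow> nat \<Rightarrow> nat \<Rightarrow> real" where
  "mean_potential \<beta> k t = measure_pmf.expectation (choices \<beta> t) (\<lambda>fs. potential \<beta> k fs t)"

lemma mean_potential_1: "mean_potential \<beta> k 1 = rising \<beta> k 0"
  by (simp add: mean_potential_def potential_def degG_def)

lemma mean_potential_step:
  assumes b: "\<beta> > 0" and t1: "t \<ge> 1"
  shows "mean_potential \<beta> k (Suc t)
       = mean_potential \<beta> k t * (1 + real k / ((2 + \<beta>) * real t - 2)) + rising \<beta> k 1"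
proof -
  define A where "A = set_pmf (choices \<beta> t)"
  define c1 where "c1 = 1 + real k / ((2 + \<beta>) * real t - 2)"
  have fA: "finite A" using finite_set_choices[OF b] by (simp add: A_def)
  have AV: "a \<in> A \<Longrightarrow> length a = t - 1 \<and> admissible a" for a using set_choices[OF b, of t] by (auto simp: A_def)
  have "mean_potential \<beta> k (Suc t) = measure_pmf.expectation
       (bind_pmf (choices \<beta> t) (\<lambda>xs. map_pmf (\<lambda>f. xs @ [f]) (fpmf \<beta> t))) (\<lambda>fs. potential \<beta> k fs (Suc t))"
    using t1 by (simp add: mean_potential_def)
  also have "\<dots> = (\<Sum>a\<in>A. pmf (choices \<beta> t) a *\<^sub>R measure_pmf.expectation
         (map_pmf (\<lambda>f. a @ [f]) (fpmf \<beta> t)) (\<lambda>fs. potential \<beta> k fs (Suc t)))"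
    using finite_subset[OF set_fpmf[OF b t1] finite_outcomes]
    by (intro pmf_expectation_bind[OF fA]) (simp_all add: A_def)
  also have "\<dots> = (\<Sum>a\<in>A. pmf (choices \<beta> t) a * (potential \<beta> k a t * c1 + rising \<beta> k 1))"
    by (rule sum.cong[OF refl]) (use AV expected_potential_step[OF b _ t1] in \<open>simp add: c1_def\<close>)
  also have "\<dots> = c1 * (\<Sum>a\<in>A. potential \<beta> k a t * pmf (choices \<beta> t) a)
      + rising \<beta> k 1 * (\<Sum>a\<in>A. pmf (choices \<beta> t) a)"
    by (simp add: algebra_simps sum.distrib sum_distrib_left)
  also have "(\<Sum>a\<in>A. pmf (choices \<beta> t) a) = 1" by (rule sum_pmf_eq_1[OF fA]) (simp add: A_def)
  also have "(\<Sum>a\<in>A. potential \<beta> k a t * pmf (choices \<beta> t) a) = mean_potential \<beta> k t"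
    unfolding mean_potential_def by (rule integral_measure_pmf_real[OF fA, symmetric]) (simp add: A_def)
  finally show ?thesis by (simp add: c1_def mult.commute)
qed

lemma power_Suc_lower: "(s::real) \<ge> 0 \<Longrightarrow> s ^ Suc q + real (Suc q) * s ^ q \<le> (s + 1) ^ Suc q"
proof (induction q)
  case 0 thus ?case by simp
next
  case (Suc q)
  have "s ^ Suc (Suc q) + real (Suc (Suc q)) * s ^ Suc q
      \<le> (s + 1) * (s ^ Suc q + real (Suc q) * s ^ q)"
    using Suc.prems by (simp add: algebra_simps)
  also have "\<dots> \<le> (s + 1) * (s + 1) ^ Suc q"
    using Suc by (intro mult_left_mono) auto
  finally show ?case by simp
qed

(* Solving the recursion: a bound C (t - 2/(2+beta))^(q+1) is preserved from t to t+1 as soon as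
   q+1 > k/(2+beta) and C is large compared with the two constants of the recursion. *)
lemma mean_potential_bound:
  assumes b: "\<beta> > 0"
  and q: "real (Suc q') > real k / (2 + \<beta>)"
  and C0: "C \<ge> 0"
  and Cbase: "rising \<beta> k 0 \<le> C * (\<beta> / (2 + \<beta>)) ^ Suc q'"
  and Cstep: "rising \<beta> k 1 \<le> C * (real (Suc q') - real k / (2 + \<beta>)) * (\<beta> / (2 + \<beta>)) ^ q'"
  and t1: "t \<ge> 1"
  shows "mean_potential \<beta> k t \<le> C * (real t - 2 / (2 + \<beta>)) ^ Suc q'"
  using t1
proof (induction t rule: dec_induct)
  case base
  have "1 - 2 / (2 + \<beta>) = \<beta> / (2 + \<beta>)" using b by (simp add: field_simps)
  thus ?case using Cbase mean_potential_1[of \<beta> k] by simp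
next
  case (step t)
  define s where "s = real t - 2 / (2 + \<beta>)"
  define p where "p = real k / (2 + \<beta>)"
  have s1: "s \<ge> \<beta> / (2 + \<beta>)"
  proof -
    have "1 - 2 / (2 + \<beta>) = \<beta> / (2 + \<beta>)" using b by (simp add: field_simps)
    thus ?thesis using step.hyps by (simp add: s_def)
  qed
  have spos: "s > 0" using s1 b by (simp add: less_le_trans[of 0 "\<beta> / (2 + \<beta>)" s])
  have Seq: "(2 + \<beta>) * real t - 2 = (2 + \<beta>) * s" using b by (simp add: s_def field_simps)
  have kS: "real k / ((2 + \<beta>) * real t - 2) = p / s" unfolding Seq p_def by simp
  have p0: "p \<ge> 0" using b by (simp add: p_def)
  have "mean_potential \<beta> k (Suc t) = mean_potential \<beta> k t * (1 + p / s) + rising \<beta> k 1"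
    using mean_potential_step[OF b step.hyps(1)] kS by simp
  also have "\<dots> \<le> C * s ^ Suc q' * (1 + p / s) + rising \<beta> k 1"
    using step.IH spos p0 by (intro add_right_mono mult_right_mono) (auto simp: s_def)
  also have "C * s ^ Suc q' * (1 + p / s) = C * s ^ Suc q' + C * p * s ^ q'"
    using spos by (simp add: field_simps)
  also have "rising \<beta> k 1 \<le> C * (real (Suc q') - p) * s ^ q'"
  proof -
    have "(\<beta> / (2 + \<beta>)) ^ q' \<le> s ^ q'" using s1 b by (intro power_mono) auto
    hence "C * (real (Suc q') - p) * (\<beta> / (2 + \<beta>)) ^ q' \<le> C * (real (Suc q') - p) * s ^ q'"
      using C0 q by (intro mult_left_mono mult_nonneg_nonneg) (auto simp: p_def)
    thus ?thesis using Cstep by (simp add: p_def)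
  qed
  hence "C * s ^ Suc q' + C * p * s ^ q' + rising \<beta> k 1 \<le> C * (s ^ Suc q' + real (Suc q') * s ^ q')"
    by (simp add: algebra_simps)
  also have "\<dots> \<le> C * (s + 1) ^ Suc q'"
    using power_Suc_lower[of s q'] spos C0 by (intro mult_left_mono) auto
  also have "s + 1 = real (Suc t) - 2 / (2 + \<beta>)" by (simp add: s_def)
  finally show ?case by simp
qed

(* The constant C is chosen large enough for the two side conditions of
   mean_potential_bound, with exponent q'+1 the least integer above k/(2+beta). *)
lemma mean_potential_poly:
  assumes b: "\<beta> > 0"
  obtains C where "C \<ge> 0"
    and "\<And>t. t \<ge> 1 \<Longrightarrow> mean_potential \<beta> k t \<le> C * real t powr (real k / (2 + \<beta>) + 1)"
proof -
  define a where "a = \<beta> / (2 + \<beta>)"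
  define p where "p = real k / (2 + \<beta>)"
  define q' where "q' = nat \<lfloor>p\<rfloor>"
  have a0: "a > 0" using b by (simp add: a_def)
  have "p \<ge> 0" using b by (simp add: p_def)
  hence q'_eq: "real q' = of_int \<lfloor>p\<rfloor>" by (simp add: q'_def)
  hence q_gt: "real (Suc q') > p" and q_le: "real (Suc q') \<le> p + 1" by linarith+
  define C where "C = max (rising \<beta> k 0 / a ^ Suc q') (rising \<beta> k 1 / ((real (Suc q') - p) * a ^ q'))"
  have C0: "C \<ge> 0" unfolding C_def using rising_nonneg[OF b] a0
    by (auto intro!: max.coboundedI1 divide_nonneg_pos)
  have C_base: "rising \<beta> k 0 \<le> C * a ^ Suc q'"
  proof -
    have "rising \<beta> k 0 / a ^ Suc q' \<le> C" unfolding C_def by simp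
    thus ?thesis using a0 by (simp add: divide_le_eq)
  qed
  have C_step: "rising \<beta> k 1 \<le> C * (real (Suc q') - p) * a ^ q'"
  proof -
    have pos: "(real (Suc q') - p) * a ^ q' > 0" using q_gt a0 by simp
    have "rising \<beta> k 1 / ((real (Suc q') - p) * a ^ q') \<le> C" unfolding C_def by simp
    thus ?thesis using pos by (simp add: divide_le_eq mult.assoc)
  qed
  show thesis
  proof (rule that[OF C0])
    fix t :: nat assume t1: "t \<ge> 1"
    have "2 / (2 + \<beta>) \<le> 1" "0 \<le> 2 / (2 + \<beta>)" using b by simp_all
    hence shift: "0 \<le> real t - 2 / (2 + \<beta>)" "real t - 2 / (2 + \<beta>) \<le> real t"
      using t1 by linarith+
    have "mean_potential \<beta> k t \<le> C * (real t - 2 / (2 + \<beta>)) ^ Suc q'"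
      by (rule mean_potential_bound[OF b _ C0 _ _ t1])
         (use q_gt C_base C_step in \<open>simp_all add: p_def a_def\<close>)
    also have "\<dots> \<le> C * real t ^ Suc q'"
      using shift C0 by (intro mult_left_mono power_mono) auto
    also have "real t ^ Suc q' = real t powr real (Suc q')"
      using t1 by (subst powr_realpow) auto
    also have "\<dots> \<le> real t powr (p + 1)"
      using q_le t1 by (intro powr_mono) auto
    finally show "mean_potential \<beta> k t \<le> C * real t powr (real k / (2 + \<beta>) + 1)"
      using C0 by (simp add: p_def mult_left_mono)
  qed
qed

lemma card_fiber:
  assumes "finite I" "finite W"
  shows "card {i\<in>I. h i \<in> W} = (\<Sum>v\<in>W. card {i\<in>I. h i = v})"
proof -
  have "{i\<in>I. h i \<in> W} = (\<Union>v\<in>W. {i\<in>I. h i = v})" by auto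
  hence "card {i\<in>I. h i \<in> W} = card (\<Union>v\<in>W. {i\<in>I. h i = v})" by simp
  also have "\<dots> = (\<Sum>v\<in>W. card {i\<in>I. h i = v})"
    by (rule card_UN_disjoint) (use assms in auto)
  finally show ?thesis .
qed

lemma blk_bounds:
  assumes "m \<ge> 1" "blk m v = j"
  shows "j * m \<le> v + m - 1" "v + m - 1 < j * m + m"
proof -
  have e: "v + m - 1 = j * m + (v + m - 1) mod m" using assms div_mult_mod_eq[of "v + m - 1" m]
    by (simp add: blk_def)
  have "(v + m - 1) mod m < m" using assms by simp
  thus "j * m \<le> v + m - 1" "v + m - 1 < j * m + m" using e by linarith+
qed

lemma card_block:
  assumes m: "m \<ge> 1" and j: "j \<ge> 1"
  shows "card {v\<in>{1..t}. blk m v = j} \<le> m"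
proof -
  obtain j' where j': "j = Suc j'" using j by (cases j) auto
  have "{v\<in>{1..t}. blk m v = j} \<subseteq> {j' * m + 1 .. j * m}"
  proof
    fix v assume "v \<in> {v\<in>{1..t}. blk m v = j}"
    hence v: "v \<ge> 1" "blk m v = j" by auto
    from blk_bounds[OF m v(2)] v(1) m show "v \<in> {j' * m + 1 .. j * m}" by (simp add: j'; arith)
  qed
  hence "card {v\<in>{1..t}. blk m v = j} \<le> card {j' * m + 1 .. j * m}" by (intro card_mono) auto
  also have "\<dots> = m" by (simp add: j')
  finally show ?thesis .
qed

lemma degH_block_sum:
  assumes t1: "t \<ge> 1" and len: "length fs = t - 1" and vf: "admissible fs"
  shows "degH m fs t j = (\<Sum>v\<in>{v\<in>{1..t}. blk m v = j}. degG fs t v)"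
proof -
  define W where "W = {v\<in>{1..t}. blk m v = j}"
  have head_range: "i \<in> {2..t} \<Longrightarrow> head fs i \<in> {1..t}" for i
    using admissible_heads[OF vf, of i] len t1 by auto
  have "card {i\<in>{2..t}. blk m i = j} = card {i\<in>{2..t}. i \<in> W}"
    by (rule card_filter_cong) (auto simp: W_def)
  also have "\<dots> = (\<Sum>v\<in>W. card {i\<in>{2..t}. i = v})"
    by (rule card_fiber) (auto simp: W_def)
  finally have tails: "card {i\<in>{2..t}. blk m i = j} = (\<Sum>v\<in>W. card {i\<in>{2..t}. i = v})" .
  have "card {i\<in>{2..t}. blk m (head fs i) = j} = card {i\<in>{2..t}. head fs i \<in> W}"
    by (rule card_filter_cong) (use head_range in \<open>auto simp: W_def\<close>)
  also have "\<dots> = (\<Sum>v\<in>W. card {i\<in>{2..t}. head fs i = v})"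
    by (rule card_fiber) (auto simp: W_def)
  finally have heads: "card {i\<in>{2..t}. blk m (head fs i) = j}
      = (\<Sum>v\<in>W. card {i\<in>{2..t}. head fs i = v})" .
  show ?thesis
    unfolding degH_def degG_def tails heads sum.distrib W_def ..
qed

lemma maxdegH_le_maxdegG:
  assumes m: "m \<ge> 1" and t1: "t \<ge> 1" and len: "length fs = t - 1" and vf: "admissible fs"
  shows "maxdegH m fs t \<le> m * Max (degG fs t ` {1..t})"
proof -
  define M where "M = Max (degG fs t ` {1..t})"
  have block: "degH m fs t j \<le> m * M" if j: "j \<ge> 1" for j
  proof -
    have "degH m fs t j = (\<Sum>v\<in>{v\<in>{1..t}. blk m v = j}. degG fs t v)"
      by (rule degH_block_sum[OF t1 len vf])
    also have "\<dots> \<le> card {v\<in>{1..t}. blk m v = j} * M"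
      using sum_bounded_above[of "{v\<in>{1..t}. blk m v = j}" "degG fs t" M] by (auto simp: M_def)
    also have "\<dots> \<le> m * M" using card_block[OF m j, of t] by simp
    finally show ?thesis .
  qed
  have "m div m \<le> (t + m - 1) div m" using t1 by (intro div_le_mono) simp
  hence "{1..blk m t} \<noteq> {}" using m by (simp add: blk_def)
  thus ?thesis
    unfolding maxdegH_def M_def[symmetric] using block by (intro Max.boundedI) auto
qed

lemma maxdeg_le_potential:
  assumes b: "\<beta> > 0" and m: "m \<ge> 1" and t1: "t \<ge> 1" and len: "length fs = t - 1" and vf: "admissible fs"
  shows "real (maxdegH m fs t) ^ k \<le> real m ^ k * potential \<beta> k fs t"
proof -
  obtain v0 where v0: "v0 \<in> {1..t}" "Max (degG fs t ` {1..t}) = degG fs t v0"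
    using Max_in[of "degG fs t ` {1..t}"] t1 by fastforce
  have "real (maxdegH m fs t) ^ k \<le> real (m * degG fs t v0) ^ k"
  proof (rule power_mono)
    show "real (maxdegH m fs t) \<le> real (m * degG fs t v0)"
      using maxdegH_le_maxdegG[OF m t1 len vf] v0(2) by (simp only: of_nat_le_iff)
  qed simp
  also have "\<dots> = real m ^ k * real (degG fs t v0) ^ k" by (simp add: power_mult_distrib)
  also have "real (degG fs t v0) ^ k \<le> rising \<beta> k (degG fs t v0)" by (rule rising_ge_power[OF b])
  also have "rising \<beta> k (degG fs t v0) \<le> potential \<beta> k fs t"
    unfolding potential_def using v0(1) by (intro member_le_sum) (auto simp: rising_nonneg[OF b])
  finally show ?thesis by (simp add: mult_left_mono)
qed

lemma choices_marginal:
  assumes b: "\<beta> > 0" and t1: "t \<ge> 1" and tT: "t \<le> T"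
  shows "map_pmf (take (t - 1)) (choices \<beta> T) = choices \<beta> t"
  using tT
proof (induction T rule: dec_induct)
  case base
  have "map_pmf (take (t - 1)) (choices \<beta> t) = map_pmf id (choices \<beta> t)"
    by (rule map_pmf_cong) (use set_choices[OF b, of t] in auto)
  thus ?case by simp
next
  case (step T)
  have T0: "T \<noteq> 0" using step.hyps t1 by auto
  have "map_pmf (take (t - 1)) (choices \<beta> (Suc T)) =
      bind_pmf (choices \<beta> T) (\<lambda>xs. map_pmf (take (t - 1)) (map_pmf (\<lambda>f. xs @ [f]) (fpmf \<beta> T)))"
    using T0 by (simp add: map_bind_pmf)
  also have "\<dots> = bind_pmf (choices \<beta> T) (\<lambda>xs. return_pmf (take (t - 1) xs))"
  proof (rule bind_pmf_cong[OF refl])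
    fix xs assume "xs \<in> set_pmf (choices \<beta> T)"
    hence "length xs = T - 1" using set_choices[OF b, of T] by auto
    hence "take (t - 1) (xs @ [f]) = take (t - 1) xs" for f using step.hyps by simp
    thus "map_pmf (take (t - 1)) (map_pmf (\<lambda>f. xs @ [f]) (fpmf \<beta> T)) = return_pmf (take (t - 1) xs)"
      by (simp add: map_pmf_comp)
  qed
  also have "\<dots> = map_pmf (take (t - 1)) (choices \<beta> T)" by (simp add: map_pmf_def)
  finally show ?case using step.IH by simp
qed

lemma maxdegH_take: "t \<ge> 1 \<Longrightarrow> maxdegH m (take (t - 1) fs) t = maxdegH m fs t"
proof -
  assume t1: "t \<ge> 1"
  have "degH m (take (t - 1) fs) t j = degH m fs t j" for j
    unfolding degH_def by (intro arg_cong2[where f="(+)"] refl card_filter_cong) (use t1 head_take in auto)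
  thus ?thesis unfolding maxdegH_def by simp
qed

lemma prob_maxdegH_event:
  assumes b: "\<beta> > 0" and t1: "t \<ge> 1" and tT: "t \<le> T"
  shows "measure_pmf.prob (choices \<beta> T) {fs. P (maxdegH m fs t)}
       = measure_pmf.prob (choices \<beta> t) {fs. P (maxdegH m fs t)}"
proof -
  let ?E = "{fs. P (maxdegH m fs t)}"
  have "measure_pmf.prob (choices \<beta> t) ?E = measure_pmf.prob (map_pmf (take (t - 1)) (choices \<beta> T)) ?E"
    using choices_marginal[OF b t1 tT] by simp
  also have "\<dots> = measure_pmf.prob (choices \<beta> T) (take (t - 1) -` ?E)"
    by (rule measure_map_pmf)
  also have "take (t - 1) -` ?E = ?E"
    using maxdegH_take[OF t1] by auto
  finally show ?thesis by simp
qed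

lemma maxdeg_markov:
  assumes b: "\<beta> > 0" and m: "m \<ge> 1" and t1: "t \<ge> 1" and tT: "t \<le> T" and c0: "c > 0"
  shows "measure_pmf.prob (choices \<beta> T) {fs. c \<le> real (maxdegH m fs t) ^ k}
     \<le> real m ^ k * mean_potential \<beta> k t / c"
proof -
  let ?G = "choices \<beta> t" and ?Y = "\<lambda>fs. real m ^ k * potential \<beta> k fs t"
  have "measure_pmf.prob (choices \<beta> T) {fs. c \<le> real (maxdegH m fs t) ^ k}
      = measure_pmf.prob ?G ({fs. c \<le> real (maxdegH m fs t) ^ k} \<inter> set_pmf ?G)"
    using prob_maxdegH_event[OF b t1 tT, of "\<lambda>d. c \<le> real d ^ k"] by (simp add: measure_Int_set_pmf)
  also have "\<dots> \<le> measure_pmf.prob ?G {fs \<in> space (measure_pmf ?G). c \<le> ?Y fs}"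
  proof (rule measure_pmf.finite_measure_mono)
    show "{fs. c \<le> real (maxdegH m fs t) ^ k} \<inter> set_pmf ?G \<subseteq> {fs \<in> space (measure_pmf ?G). c \<le> ?Y fs}"
      using set_choices[OF b, of t] maxdeg_le_potential[OF b m t1, of _ k] by fastforce
  qed simp
  also have "\<dots> \<le> measure_pmf.expectation ?G ?Y / c"
  proof (rule integral_Markov_inequality_measure)
    show "integrable (measure_pmf ?G) ?Y"
      by (rule integrable_measure_pmf_finite[OF finite_set_choices[OF b]])
    show "AE x in measure_pmf ?G. 0 \<le> ?Y x"
      by (rule AE_I2) (auto simp: potential_def rising_nonneg[OF b] intro!: sum_nonneg mult_nonneg_nonneg)
  qed (use c0 in auto)
  also have "measure_pmf.expectation ?G ?Y = real m ^ k * mean_potential \<beta> k t"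
    by (simp add: mean_potential_def)
  finally show ?thesis .
qed

lemma maxdeg_tail:
  assumes b: "\<beta> > 0" and m: "m \<ge> 1"
  obtains C where "C \<ge> 0"
    and "\<And>T t c. 1 \<le> t \<Longrightarrow> t \<le> T \<Longrightarrow> c > 0 \<Longrightarrow>
           measure_pmf.prob (choices \<beta> T) {fs. c \<le> real (maxdegH m fs t) ^ k}
           \<le> C * real t powr (real k / (2 + \<beta>) + 1) / c"
proof -
  obtain C where C0: "C \<ge> 0"
    and mean: "\<And>t. t \<ge> 1 \<Longrightarrow> mean_potential \<beta> k t \<le> C * real t powr (real k / (2 + \<beta>) + 1)"
    using mean_potential_poly[OF b] by blast
  show thesis
  proof (rule that[of "real m ^ k * C"])
    show "real m ^ k * C \<ge> 0" using C0 by simp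
    fix T t :: nat and c :: real assume t1: "1 \<le> t" and tT: "t \<le> T" and c0: "c > 0"
    have "measure_pmf.prob (choices \<beta> T) {fs. c \<le> real (maxdegH m fs t) ^ k}
        \<le> real m ^ k * mean_potential \<beta> k t / c"
      by (rule maxdeg_markov[OF b m t1 tT c0])
    also have "\<dots> \<le> real m ^ k * (C * real t powr (real k / (2 + \<beta>) + 1)) / c"
      using mean[OF t1] c0 by (intro divide_right_mono mult_left_mono) auto
    finally show "measure_pmf.prob (choices \<beta> T) {fs. c \<le> real (maxdegH m fs t) ^ k}
        \<le> real m ^ k * C * real t powr (real k / (2 + \<beta>) + 1) / c" by simp
  qed
qed

lemma le_square_ratio_power:
  fixes x s d :: real
  assumes "s > 0" and "x \<ge> 0" and "x \<le> (d / s)\<^sup>2"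
  shows "(x * s\<^sup>2) ^ k \<le> d ^ (2 * k)"
proof -
  have "x * s\<^sup>2 \<le> d\<^sup>2" using assms by (simp add: power_divide le_divide_eq)
  hence "(x * s\<^sup>2) ^ k \<le> (d\<^sup>2) ^ k" using assms(2) by (intro power_mono) auto
  thus ?thesis by (simp add: power_mult)
qed

(* Tail bound for the normalised maximal degree: with e = 2/(2+beta),
   P((Delta(H_t) / t^e)^2 >= x) = O(t^(1 - e k) / x^k), from maxdeg_tail with exponent 2k. *)
lemma normalised_degree_tail:
  assumes b: "\<beta> > 0" and m: "m \<ge> 1"
  obtains C where "C \<ge> 0"
    and "\<And>T t x. 1 \<le> t \<Longrightarrow> t \<le> T \<Longrightarrow> x > 0 \<Longrightarrow>
           measure_pmf.prob (choices \<beta> T)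
             {fs. x \<le> (real (maxdegH m fs t) / real t powr (2 / (2 + \<beta>)))\<^sup>2}
           \<le> C * real t powr (1 - 2 / (2 + \<beta>) * real k) / x ^ k"
proof -
  define e where "e = 2 / (2 + \<beta>)"
  obtain C where C0: "C \<ge> 0" and tail: "\<And>T t c. 1 \<le> t \<Longrightarrow> t \<le> T \<Longrightarrow> c > 0 \<Longrightarrow>
      measure_pmf.prob (choices \<beta> T) {fs. c \<le> real (maxdegH m fs t) ^ (2 * k)}
      \<le> C * real t powr (e * real k + 1) / c"
    using maxdeg_tail[OF b m, of "2 * k"] by (auto simp: e_def)
  show thesis
  proof (rule that[OF C0])
    fix T t :: nat and x :: real assume t1: "1 \<le> t" and tT: "t \<le> T" and x0: "x > 0"
    have tpos: "real t > 0" using t1 by simp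
    have square: "(real t powr e)\<^sup>2 = real t powr (2 * e)"
      by (simp add: power2_eq_square powr_add[symmetric])
    define c where "c = (x * real t powr (2 * e)) ^ k"
    have c0: "c > 0" using x0 tpos by (simp add: c_def)
    have "measure_pmf.prob (choices \<beta> T) {fs. x \<le> (real (maxdegH m fs t) / real t powr e)\<^sup>2}
        \<le> measure_pmf.prob (choices \<beta> T) {fs. c \<le> real (maxdegH m fs t) ^ (2 * k)}"
      using le_square_ratio_power[of "real t powr e" x] tpos x0
      by (intro measure_pmf.finite_measure_mono) (auto simp: c_def square)
    also have "\<dots> \<le> C * real t powr (e * real k + 1) / c"
      by (rule tail[OF t1 tT c0])
    also have "c = x ^ k * real t powr (2 * e * real k)"
      using tpos by (simp add: c_def power_mult_distrib powr_power mult.commute)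
    also have "real t powr (e * real k + 1) = real t powr (1 - e * real k) * real t powr (2 * e * real k)"
      by (simp add: powr_add[symmetric] algebra_simps)
    finally show "measure_pmf.prob (choices \<beta> T)
             {fs. x \<le> (real (maxdegH m fs t) / real t powr (2 / (2 + \<beta>)))\<^sup>2}
           \<le> C * real t powr (1 - 2 / (2 + \<beta>) * real k) / x ^ k"
      using tpos by (simp add: e_def)
  qed
qed

(* The elementary estimate a * sum_{i<=n} i^(a-1) <= n^a for 0 < a < 1: each term is
   bounded by the increment i^a - (i-1)^a, by the mean value theorem. *)
lemma powr_step:
  fixes a :: real
  assumes a: "0 < a" "a < 1" and i: "i \<ge> 1"
  shows "a * real i powr (a - 1) \<le> real i powr a - real (i - 1) powr a"
proof (cases "i = 1")
  case True thus ?thesis using a by simp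
next
  case False
  hence i2: "i \<ge> 2" using i by simp
  have "\<exists>z. real (i - 1) < z \<and> z < real i \<and>
      real i powr a - real (i - 1) powr a = (real i - real (i - 1)) * (a * z powr (a - 1))"
  proof (rule MVT2)
    show "real (i - 1) < real i" using i by simp
    fix x assume "real (i - 1) \<le> x" "x \<le> real i"
    hence "x > 0" using i2 by simp
    thus "((\<lambda>z. z powr a) has_real_derivative a * x powr (a - 1)) (at x)"
      by (rule has_real_derivative_powr)
  qed
  then obtain z where z: "real (i - 1) < z" "z < real i"
    "real i powr a - real (i - 1) powr a = (real i - real (i - 1)) * (a * z powr (a - 1))" by blast
  have zpos: "z > 0" using z(1) i2 by simp
  have "real i powr (a - 1) \<le> z powr (a - 1)"
    by (rule powr_mono2') (use a zpos z in auto)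
  hence "a * real i powr (a - 1) \<le> a * z powr (a - 1)" using a by simp
  also have "\<dots> = real i powr a - real (i - 1) powr a" using z(3) i by (simp add: of_nat_diff)
  finally show ?thesis .
qed

lemma powr_sum_bound:
  fixes a :: real
  assumes a: "0 < a" "a < 1"
  shows "a * (\<Sum>i=1..n. real i powr (a - 1)) \<le> real n powr a"
proof (induction n)
  case 0 thus ?case by simp
next
  case (Suc n)
  have "a * (\<Sum>i=1..Suc n. real i powr (a - 1)) = a * (\<Sum>i=1..n. real i powr (a - 1)) + a * real (Suc n) powr (a - 1)"
    by (simp add: distrib_left)
  also have "\<dots> \<le> real n powr a + (real (Suc n) powr a - real (Suc n - 1) powr a)"
    using Suc powr_step[OF a, of "Suc n"] by (intro add_mono) auto
  finally show ?case by simp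
qed

lemma powr_one_plus: "(x::real) > 0 \<Longrightarrow> x powr (1 + r) = x * x powr r"
  by (simp add: powr_add)

(* The i-th scale event: the i-th summand of B_delta reaches its share a n^delta i^(a-1) of
   n^(a+delta), where a = beta/(2+beta). *)
definition scale_event :: "real \<Rightarrow> nat \<Rightarrow> real \<Rightarrow> nat \<Rightarrow> nat \<Rightarrow> choice list set" where
  "scale_event \<beta> m \<delta> n i = {fs.
     \<beta> / (2 + \<beta>) * real n powr \<delta> * real i powr (\<beta> / (2 + \<beta>) - 1)
     \<le> (real (maxdegH m fs (m * i)) / real (m * i) powr (2 / (2 + \<beta>)))\<^sup>2}"

(* B_delta is covered by the n scale events: if every summand stays below its share, the
   whole sum stays below n^delta * (a * sum i^(a-1)) <= n^(a+delta). *)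
lemma eventB_cover:
  assumes b: "\<beta> > 0" and n: "n \<ge> 1"
  shows "eventB \<beta> m \<delta> n \<subseteq> (\<Union>i\<in>{1..n}. scale_event \<beta> m \<delta> n i)"
proof
  fix fs assume fsB: "fs \<in> eventB \<beta> m \<delta> n"
  define a where "a = \<beta> / (2 + \<beta>)"
  define X where "X i = (real (maxdegH m fs (m * i)) / real (m * i) powr (2 / (2 + \<beta>)))\<^sup>2" for i
  have a0: "0 < a" and a1: "a < 1" using b by (auto simp: a_def field_simps)
  show "fs \<in> (\<Union>i\<in>{1..n}. scale_event \<beta> m \<delta> n i)"
  proof (rule ccontr)
    assume "fs \<notin> (\<Union>i\<in>{1..n}. scale_event \<beta> m \<delta> n i)"
    hence below: "X i < a * real n powr \<delta> * real i powr (a - 1)" if "i \<in> {1..n}" for i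
      using that by (auto simp: scale_event_def X_def a_def not_le)
    have "(\<Sum>i=1..n. X i) < (\<Sum>i=1..n. a * real n powr \<delta> * real i powr (a - 1))"
      by (rule sum_strict_mono) (use below n in auto)
    also have "\<dots> = real n powr \<delta> * (a * (\<Sum>i=1..n. real i powr (a - 1)))"
      by (simp add: sum_distrib_left algebra_simps)
    also have "\<dots> \<le> real n powr \<delta> * real n powr a"
      by (rule mult_left_mono[OF powr_sum_bound[OF a0 a1]]) simp
    also have "\<dots> = real n powr (\<beta> / (2 + \<beta>) + \<delta>)"
      by (simp add: a_def powr_add)
    finally show False using fsB by (simp add: eventB_def X_def)
  qed
qed

(* Each scale event has probability O(i n^(-delta k)) = O(n^(1 - delta k)): apply
   normalised_degree_tail at time t = m i with threshold a n^delta i^(-e). *)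
lemma scale_event_prob:
  assumes b: "\<beta> > 0" and m: "m \<ge> 1"
  obtains K where "K \<ge> 0"
    and "\<And>n i. i \<in> {1..n} \<Longrightarrow>
      measure_pmf.prob (choices \<beta> (m * n)) (scale_event \<beta> m \<delta> n i) \<le> K * real n powr (1 - \<delta> * real k)"
proof -
  define a where "a = \<beta> / (2 + \<beta>)"
  define e where "e = 2 / (2 + \<beta>)"
  have a0: "a > 0" using b by (simp add: a_def)
  have ae: "a - 1 = - e" using b by (simp add: a_def e_def field_simps)
  obtain C where C0: "C \<ge> 0" and tail: "\<And>T t x. 1 \<le> t \<Longrightarrow> t \<le> T \<Longrightarrow> x > 0 \<Longrightarrow>
      measure_pmf.prob (choices \<beta> T) {fs. x \<le> (real (maxdegH m fs t) / real t powr e)\<^sup>2}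
      \<le> C * real t powr (1 - e * real k) / x ^ k"
    using normalised_degree_tail[OF b m, of k] by (auto simp: e_def)
  define K where "K = C * real m powr (1 - e * real k) / a ^ k"
  show thesis
  proof (rule that)
    show K0: "K \<ge> 0" using C0 a0 by (simp add: K_def)
    fix n i :: nat assume i: "i \<in> {1..n}"
    have ipos: "real i > 0" and npos: "real n > 0" using i by auto
    define thr where "thr = a * real n powr \<delta> * real i powr (a - 1)"
    have "measure_pmf.prob (choices \<beta> (m * n)) (scale_event \<beta> m \<delta> n i)
        \<le> C * real (m * i) powr (1 - e * real k) / thr ^ k"
      unfolding scale_event_def thr_def a_def[symmetric] e_def[symmetric]
      by (rule tail) (use i m ipos a0 in auto)
    also have "\<dots> = K * real i * inverse (real n powr (\<delta> * real k))"
    proof -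
      have "thr ^ k = a ^ k * real n powr (\<delta> * real k) * real i powr (- e * real k)"
        using ipos npos unfolding thr_def ae by (simp add: power_mult_distrib powr_power mult.commute)
      moreover have "real (m * i) powr (1 - e * real k)
          = real m powr (1 - e * real k) * real i * real i powr (- e * real k)"
        using powr_one_plus[OF ipos, of "- e * real k"] by (simp add: powr_mult)
      ultimately show ?thesis using a0 ipos npos by (simp add: K_def field_simps)
    qed
    also have "\<dots> \<le> K * real n * inverse (real n powr (\<delta> * real k))"
      using i K0 by (intro mult_right_mono mult_left_mono) auto
    also have "\<dots> = K * real n powr (1 - \<delta> * real k)"
      using powr_one_plus[OF npos, of "- (\<delta> * real k)"] by (simp add: powr_minus)
    finally show "measure_pmf.prob (choices \<beta> (m * n)) (scale_event \<beta> m \<delta> n i)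
        \<le> K * real n powr (1 - \<delta> * real k)" .
  qed
qed

lemma eventB_prob_bound:
  assumes b: "\<beta> > 0" and m: "m \<ge> 1"
  obtains K where "K \<ge> 0"
    and "\<And>n. n \<ge> 1 \<Longrightarrow>
      measure_pmf.prob (choices \<beta> (m * n)) (eventB \<beta> m \<delta> n) \<le> K * real n powr (2 - \<delta> * real k)"
proof -
  obtain K where K0: "K \<ge> 0" and scale: "\<And>n i. i \<in> {1..n} \<Longrightarrow>
      measure_pmf.prob (choices \<beta> (m * n)) (scale_event \<beta> m \<delta> n i) \<le> K * real n powr (1 - \<delta> * real k)"
    using scale_event_prob[OF b m] by blast
  show thesis
  proof (rule that[OF K0])
    fix n :: nat assume n: "n \<ge> 1"
    have "measure_pmf.prob (choices \<beta> (m * n)) (eventB \<beta> m \<delta> n)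
        \<le> measure_pmf.prob (choices \<beta> (m * n)) (\<Union>i\<in>{1..n}. scale_event \<beta> m \<delta> n i)"
      by (rule measure_pmf.finite_measure_mono[OF eventB_cover[OF b n]]) simp
    also have "\<dots> \<le> (\<Sum>i\<in>{1..n}. measure_pmf.prob (choices \<beta> (m * n)) (scale_event \<beta> m \<delta> n i))"
      by (rule measure_pmf.finite_measure_subadditive_finite) auto
    also have "\<dots> \<le> (\<Sum>i\<in>{1..n}. K * real n powr (1 - \<delta> * real k))"
      by (rule sum_mono) (rule scale)
    also have "\<dots> = K * real n powr (2 - \<delta> * real k)"
      using powr_one_plus[of "real n" "1 - \<delta> * real k"] n by simp
    finally show "measure_pmf.prob (choices \<beta> (m * n)) (eventB \<beta> m \<delta> n)
        \<le> K * real n powr (2 - \<delta> * real k)" .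
  qed
qed

(* Lemma 8: choose k with delta k \<ge> gamma + 2 in eventB_prob_bound. *)
theorem lemma8:
  fixes \<beta> \<delta> \<gamma> :: real and m :: nat
  assumes "\<beta> > 0" and "m \<ge> 1" and "\<delta> > 0" and "\<gamma> > 0"
  shows "\<exists>L. \<forall>n::nat. n \<ge> 1 \<longrightarrow>
           measure_pmf.prob (choices \<beta> (m * n)) (eventB \<beta> m \<delta> n) \<le> L * real n powr (- \<gamma>)"
proof -
  define k where "k = nat \<lceil>(\<gamma> + 2) / \<delta>\<rceil>"
  have "(\<gamma> + 2) / \<delta> \<le> real k" unfolding k_def by (rule real_nat_ceiling_ge)
  hence exponent: "2 - \<delta> * real k \<le> - \<gamma>" using \<open>\<delta> > 0\<close> by (simp add: field_simps)
  obtain K where K0: "K \<ge> 0" and bound: "\<And>n. n \<ge> 1 \<Longrightarrow>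
      measure_pmf.prob (choices \<beta> (m * n)) (eventB \<beta> m \<delta> n) \<le> K * real n powr (2 - \<delta> * real k)"
    using eventB_prob_bound[OF assms(1,2)] by blast
  have "measure_pmf.prob (choices \<beta> (m * n)) (eventB \<beta> m \<delta> n) \<le> K * real n powr (- \<gamma>)"
    if n: "n \<ge> 1" for n :: nat
  proof -
    have "real n powr (2 - \<delta> * real k) \<le> real n powr (- \<gamma>)"
      using exponent n by (intro powr_mono) auto
    thus ?thesis using bound[OF n] K0 by (meson mult_left_mono order_trans)
  qed
  thus ?thesis by blast
qed

end
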